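(* Every satisfiable set $\Phi\subseteq\mathrm{FO}\cup\sim\mathrm{FO}$ is satisfied (in first-order team semantics) by a team of cardinality $|\Phi\cap\sim\mathrm{FO}|$. In particular the team can always be chosen countable.
   Context: First-order team semantics: $(\mathcal{A},T)\models\alpha$ for $\alpha\in\mathrm{FO}$ iff $(\mathcal{A},s)\models\alpha$ for all $s\in T$; $(\mathcal{A},T)\models\sim\varphi$ iff $(\mathcal{A},T)\not\models\varphi$; $\sim\mathrm{FO}=\{\sim\alpha\mid\alpha\in\mathrm{FO}\}$ is a fragment of the Boolean closure $\mathcal{B}(\mathrm{FO})$ (closure under $\sim$ and material implication). This generalizes the empty team property (every $\Phi\subseteq\mathrm{FO}$ is satisfied by the empty team). *)

theory Defs
  imports Main "HOL-Library.Countable_Set"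
begin

datatype ('f, 'v) trm = Var 'v | Fn 'f "('f, 'v) trm list"

datatype ('f, 'r, 'v) fm =
    Eq "('f, 'v) trm" "('f, 'v) trm"
  | Rel 'r "('f, 'v) trm list"
  | Neg "('f, 'r, 'v) fm"
  | Conj "('f, 'r, 'v) fm" "('f, 'r, 'v) fm"
  | Disj "('f, 'r, 'v) fm" "('f, 'r, 'v) fm"
  | Ex 'v "('f, 'r, 'v) fm"
  | All 'v "('f, 'r, 'v) fm"

text \<open>A structure with universe the (nonempty) type 'a.\<close>
record ('a, 'f, 'r) struct =
  funs :: "'f \<Rightarrow> 'a list \<Rightarrow> 'a"
  rels :: "'r \<Rightarrow> 'a list \<Rightarrow> bool"

primrec teval :: "('a, 'f, 'r) struct \<Rightarrow> ('v \<Rightarrow> 'a) \<Rightarrow> ('f, 'v) trm \<Rightarrow> 'a" where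
  "teval M s (Var x) = s x"
| "teval M s (Fn f ts) = funs M f (map (teval M s) ts)"

primrec sat :: "('a, 'f, 'r) struct \<Rightarrow> ('v \<Rightarrow> 'a) \<Rightarrow> ('f, 'r, 'v) fm \<Rightarrow> bool" where
  "sat M s (Eq t u) = (teval M s t = teval M s u)"
| "sat M s (Rel R ts) = rels M R (map (teval M s) ts)"
| "sat M s (Neg \<phi>) = (\<not> sat M s \<phi>)"
| "sat M s (Conj \<phi> \<psi>) = (sat M s \<phi> \<and> sat M s \<psi>)"
| "sat M s (Disj \<phi> \<psi>) = (sat M s \<phi> \<or> sat M s \<psi>)"
| "sat M s (Ex x \<phi>) = (\<exists>a. sat M (s(x := a)) \<phi>)"
| "sat M s (All x \<phi>) = (\<forall>a. sat M (s(x := a)) \<phi>)"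

text \<open>Boolean closure B(FO): FO formulas, Boolean negation \<sim>, material implication.\<close>
datatype ('f, 'r, 'v) bfm =
    FO "('f, 'r, 'v) fm"
  | BNot "('f, 'r, 'v) bfm"
  | BImp "('f, 'r, 'v) bfm" "('f, 'r, 'v) bfm"

primrec tsat :: "('a, 'f, 'r) struct \<Rightarrow> ('v \<Rightarrow> 'a) set \<Rightarrow> ('f, 'r, 'v) bfm \<Rightarrow> bool" where
  "tsat M T (FO \<alpha>) = (\<forall>s\<in>T. sat M s \<alpha>)"
| "tsat M T (BNot \<phi>) = (\<not> tsat M T \<phi>)"
| "tsat M T (BImp \<phi> \<psi>) = (tsat M T \<phi> \<longrightarrow> tsat M T \<psi>)"

definition FOset :: "('f, 'r, 'v) bfm set" where
  "FOset = range FO"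

definition negFOset :: "('f, 'r, 'v) bfm set" where
  "negFOset = {BNot (FO \<alpha>) | \<alpha>. True}"

end

theory Submission
  imports Defs "HOL-Library.Countable"
begin

text \<open>First-order formulas are flat: they hold in a team iff they hold in each of its
  assignments, so they survive passing to a subteam. A formula \<open>\<sim>\<alpha>\<close> only asks for one
  assignment falsifying \<open>\<alpha>\<close>. Hence, from any team satisfying \<open>\<Phi>\<close>, keeping one such witness
  per negated formula of \<open>\<Phi>\<close> gives a subteam that still satisfies \<open>\<Phi>\<close>. Over countable
  vocabularies there are only countably many formulas, so this subteam is countable.\<close>

instance trm :: (countable, countable) countable
  by countable_datatype

instance fm :: (countable, countable, countable) countable
  by countable_datatype

lemma countable_UNIV_fm:
  assumes "countable (UNIV :: 'f set)" "countable (UNIV :: 'r set)" "countable (UNIV :: 'v set)"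
  shows "countable (UNIV :: ('f, 'r, 'v) fm set)"
proof -
  let ?h = "map_fm (to_nat_on (UNIV :: 'f set)) (to_nat_on (UNIV :: 'r set))
                   (to_nat_on (UNIV :: 'v set))"
  have "inj ?h"
    by (rule fm.inj_map) (simp_all add: assms inj_on_to_nat_on)
  then show ?thesis
    by (metis countableI_type countable_image_inj_on)
qed

lemma countable_negFOset:
  assumes "countable (UNIV :: 'f set)" "countable (UNIV :: 'r set)" "countable (UNIV :: 'v set)"
  shows "countable (negFOset :: ('f, 'r, 'v) bfm set)"
proof -
  have "negFOset = (BNot \<circ> FO) ` (UNIV :: ('f, 'r, 'v) fm set)"
    unfolding negFOset_def by auto
  then show ?thesis
    using countable_image[OF countable_UNIV_fm[OF assms]] by metis
qed

lemma tsat_FO_subteam: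
  assumes "tsat M T (FO \<alpha>)" "S \<subseteq> T"
  shows "tsat M S (FO \<alpha>)"
  using assms by auto

lemma tsat_BNot_FO_iff: "tsat M T (BNot (FO \<alpha>)) \<longleftrightarrow> (\<exists>s\<in>T. \<not> sat M s \<alpha>)"
  by auto

lemma negFOset_witnesses:
  assumes "\<forall>\<phi>\<in>N. tsat M T \<phi>" "N \<subseteq> negFOset"
  obtains g where "\<And>\<alpha>. BNot (FO \<alpha>) \<in> N \<Longrightarrow> g (BNot (FO \<alpha>)) \<in> T \<and> \<not> sat M (g (BNot (FO \<alpha>))) \<alpha>"
proof -
  have "\<forall>\<phi>\<in>N. \<exists>s\<in>T. \<forall>\<alpha>. \<phi> = BNot (FO \<alpha>) \<longrightarrow> \<not> sat M s \<alpha>"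
  proof
    fix \<phi> assume "\<phi> \<in> N"
    then obtain \<alpha> where \<phi>: "\<phi> = BNot (FO \<alpha>)" and "tsat M T \<phi>"
      using assms unfolding negFOset_def by blast
    then obtain s where "s \<in> T" "\<not> sat M s \<alpha>"
      by (auto simp: tsat_BNot_FO_iff)
    with \<phi> show "\<exists>s\<in>T. \<forall>\<beta>. \<phi> = BNot (FO \<beta>) \<longrightarrow> \<not> sat M s \<beta>"
      by auto
  qed
  then obtain g where "\<forall>\<phi>\<in>N. g \<phi> \<in> T \<and> (\<forall>\<alpha>. \<phi> = BNot (FO \<alpha>) \<longrightarrow> \<not> sat M (g \<phi>) \<alpha>)"
    by metis
  then show thesis
    by (intro that) auto
qed

lemma witness_subteam:
  assumes \<Phi>: "\<Phi> \<subseteq> FOset \<union> negFOset" and sat: "\<forall>\<phi>\<in>\<Phi>. tsat M T \<phi>"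
  obtains g where "g ` (\<Phi> \<inter> negFOset) \<subseteq> T" "\<forall>\<phi>\<in>\<Phi>. tsat M (g ` (\<Phi> \<inter> negFOset)) \<phi>"
proof -
  let ?N = "\<Phi> \<inter> negFOset"
  obtain g where g: "\<And>\<alpha>. BNot (FO \<alpha>) \<in> ?N \<Longrightarrow> g (BNot (FO \<alpha>)) \<in> T \<and> \<not> sat M (g (BNot (FO \<alpha>))) \<alpha>"
    using negFOset_witnesses[of ?N M T] sat by blast
  have sub: "g ` ?N \<subseteq> T"
    using g unfolding negFOset_def by blast
  have "tsat M (g ` ?N) \<phi>" if "\<phi> \<in> \<Phi>" for \<phi>
  proof -
    consider \<alpha> where "\<phi> = FO \<alpha>" | \<alpha> where "\<phi> = BNot (FO \<alpha>)"
      using \<open>\<phi> \<in> \<Phi>\<close> \<Phi> unfolding FOset_def negFOset_def by blast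
    then show ?thesis
    proof cases
      case (1 \<alpha>)
      then show ?thesis
        using tsat_FO_subteam sat \<open>\<phi> \<in> \<Phi>\<close> sub by blast
    next
      case (2 \<alpha>)
      then have "\<phi> \<in> ?N"
        using \<open>\<phi> \<in> \<Phi>\<close> unfolding negFOset_def by blast
      with g[of \<alpha>] 2 show ?thesis
        by (auto simp: tsat_BNot_FO_iff)
    qed
  qed
  with sub show thesis
    by (intro that) auto
qed

theorem mainTheorem6:
  fixes \<Phi> :: "('f, 'r, 'v) bfm set"
  assumes "\<Phi> \<subseteq> FOset \<union> negFOset"
    and "\<exists>(M :: ('a, 'f, 'r) struct) (T :: ('v \<Rightarrow> 'a) set). \<forall>\<phi>\<in>\<Phi>. tsat M T \<phi>"
  shows "\<exists>(M :: ('a, 'f, 'r) struct) (T :: ('v \<Rightarrow> 'a) set).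
           (\<forall>\<phi>\<in>\<Phi>. tsat M T \<phi>)
         \<and> (\<exists>g. T \<subseteq> g ` (\<Phi> \<inter> negFOset))
         \<and> ((countable (UNIV :: 'f set) \<and> countable (UNIV :: 'r set) \<and> countable (UNIV :: 'v set))
              \<longrightarrow> countable T)"
proof -
  obtain M :: "('a, 'f, 'r) struct" and T :: "('v \<Rightarrow> 'a) set"
    where sat: "\<forall>\<phi>\<in>\<Phi>. tsat M T \<phi>"
    using assms(2) by blast
  obtain g where "\<forall>\<phi>\<in>\<Phi>. tsat M (g ` (\<Phi> \<inter> negFOset)) \<phi>"
    by (rule witness_subteam[OF assms(1) sat])
  moreover have "countable (g ` (\<Phi> \<inter> negFOset))"
    if "countable (UNIV :: 'f set)" "countable (UNIV :: 'r set)" "countable (UNIV :: 'v set)"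
    using countable_subset[OF inf_le2 countable_negFOset[OF that]] by (rule countable_image)
  ultimately show ?thesis
    by (intro exI[of _ M] exI[of _ "g ` (\<Phi> \<inter> negFOset)"] conjI exI[of _ g] impI) auto
qed

end
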